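(* Let $k$ be a positive integer and let $s$ be an even positive integer. Then there exists a hypergraph $\mathcal{F}$ (with $s < |e|$ for every hyperedge $e$ of $\mathcal{F}$) such that $\chi\left({\rm KG}^2(\mathcal{F}, s)\right) = k$ and $${\rm cd}^2(\mathcal{F}, l) = {\rm ecd}^2(\mathcal{F}, l) = k(2l - s + 1)$$ for each $l \in \left\{\frac{s}{2} + 1, \frac{s}{2} + 2, \dots, s\right\}$.
   Context: A hypergraph $\mathcal{F}$ consists of a finite vertex set $V(\mathcal{F})$ and a set $E(\mathcal{F}) \subseteq 2^{V(\mathcal{F})} \setminus \{\varnothing\}$ of hyperedges. For an integer $r \geq 2$ and a nonnegative integer $s$ with $s < |e|$ for every hyperedge $e$ of $\mathcal{F}$, the generalized Kneser hypergraph ${\rm KG}^r(\mathcal{F}, s)$ is the $r$-uniform hypergraph whose vertex set is $E(\mathcal{F})$, in which $r$ distinct hyperedges $e_1, \dots, e_r$ of $\mathcal{F}$ form a hyperedge whenever $|e_i \cap e_j| \leq s$ for all distinct $i, j \in \{1, \dots, r\}$. Its chromatic number $\chi$ is the minimum size of a set $C$ admitting a map $f : E(\mathcal{F}) \to C$ such that no hyperedge of ${\rm KG}^r(\mathcal{F}, s)$ is monochromatic (for $r = 2$ this is the ordinary chromatic number of the graph). For sets $A, B$ and a nonnegative integer $t$, write $A \subseteq_t B$ if $|A \setminus B| \leq t$. For a nonnegative integer $t$ with $t < |e|$ for all hyperedges $e$, the $t$-th $r$-colorability defect ${\rm cd}^r(\mathcal{F}, t)$ is the minimum cardinality of a set $X_0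 \subseteq V(\mathcal{F})$ for which there is a partition $\{X_1, \dots, X_r\}$ of $V(\mathcal{F}) \setminus X_0$ (parts may be empty) such that $e \not\subseteq_t X_i$ for every hyperedge $e \in E(\mathcal{F})$ and every $i \in \{1, \dots, r\}$. The $t$-th equitable $r$-colorability defect ${\rm ecd}^r(\mathcal{F}, t)$ is defined in the same way, with the additional requirement that $\big||X_i| - |X_j|\big| \leq 1$ for all $1 \leq i < j \leq r$. *)

theory Defs
  imports Main
begin

definition hypergraph :: "'a set \<Rightarrow> 'a set set \<Rightarrow> bool" where
  "hypergraph V E \<longleftrightarrow> finite V \<and> E \<subseteq> Pow V \<and> {} \<notin> E"

text \<open>A proper colouring of KG^r(F,s) with colours {0..<n}: no r distinct hyperedges that
  pairwise intersect in at most s elements receive the same colour.\<close>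
definition kneser_proper_col :: "nat \<Rightarrow> 'a set set \<Rightarrow> nat \<Rightarrow> ('a set \<Rightarrow> nat) \<Rightarrow> nat \<Rightarrow> bool" where
  "kneser_proper_col r E s f n \<longleftrightarrow>
     (\<forall>e\<in>E. f e < n) \<and>
     \<not> (\<exists>S. S \<subseteq> E \<and> card S = r \<and>
            (\<forall>e1\<in>S. \<forall>e2\<in>S. e1 \<noteq> e2 \<longrightarrow> card (e1 \<inter> e2) \<le> s) \<and>
            (\<exists>c. \<forall>e\<in>S. f e = c))"

definition kneser_chi :: "nat \<Rightarrow> 'a set set \<Rightarrow> nat \<Rightarrow> nat" where
  "kneser_chi r E s = (LEAST n. \<exists>f. kneser_proper_col r E s f n)"

text \<open>Admissible choice of X0 and partition X_1..X_r of V - X0 (parts may be empty)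
  such that no hyperedge e satisfies e \<subseteq>_t X_i, i.e. |e - X_i| > t.\<close>
definition cd_admissible :: "nat \<Rightarrow> 'a set \<Rightarrow> 'a set set \<Rightarrow> nat \<Rightarrow> 'a set \<Rightarrow> (nat \<Rightarrow> 'a set) \<Rightarrow> bool" where
  "cd_admissible r V E t X0 X \<longleftrightarrow>
     X0 \<subseteq> V \<and>
     (\<Union>i\<in>{1..r}. X i) = V - X0 \<and>
     (\<forall>i\<in>{1..r}. \<forall>j\<in>{1..r}. i \<noteq> j \<longrightarrow> X i \<inter> X j = {}) \<and>
     (\<forall>e\<in>E. \<forall>i\<in>{1..r}. \<not> (card (e - X i) \<le> t))"

definition cd :: "nat \<Rightarrow> 'a set \<Rightarrow> 'a set set \<Rightarrow> nat \<Rightarrow> nat" where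
  "cd r V E t = (LEAST n. \<exists>X0 X. cd_admissible r V E t X0 X \<and> card X0 = n)"

definition ecd :: "nat \<Rightarrow> 'a set \<Rightarrow> 'a set set \<Rightarrow> nat \<Rightarrow> nat" where
  "ecd r V E t = (LEAST n. \<exists>X0 X. cd_admissible r V E t X0 X \<and> card X0 = n \<and>
      (\<forall>i\<in>{1..r}. \<forall>j\<in>{1..r}. \<bar>int (card (X i)) - int (card (X j))\<bar> \<le> 1))"

end

theory Submission
  imports Defs
begin

text \<open>Take \<open>k\<close> pairwise disjoint hyperedges of size \<open>m = s + 1\<close>. Any two of them meet
  in at most \<open>s\<close> points, so \<open>KG\<^sup>2(F, s)\<close> is the complete graph on \<open>k\<close> vertices.
  For the colourability defect, every hyperedge \<open>e\<close> must keep more than \<open>l\<close> points outside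
  each of \<open>X\<^sub>1\<close> and \<open>X\<^sub>2\<close>; the sets \<open>e - X\<^sub>1\<close> and \<open>e - X\<^sub>2\<close> cover \<open>e\<close> and
  meet in \<open>e \<inter> X\<^sub>0\<close>, hence \<open>|e \<inter> X\<^sub>0| \<ge> 2(l + 1) - m\<close>. Cutting every hyperedge into
  three intervals of sizes \<open>2(l + 1) - m\<close>, \<open>m - l - 1\<close>, \<open>m - l - 1\<close> attains this bound
  with \<open>|X\<^sub>1| = |X\<^sub>2|\<close>, so both defects equal \<open>k (2l + 2 - m)\<close>.\<close>

lemma kneser_proper_col_2_iff:
  assumes "pairwise (\<lambda>e1 e2. card (e1 \<inter> e2) \<le> s) E"
  shows "kneser_proper_col 2 E s f n \<longleftrightarrow> f ` E \<subseteq> {..<n} \<and> inj_on f E"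
proof
  assume col: "kneser_proper_col 2 E s f n"
  then have range: "\<forall>e\<in>E. f e < n"
    unfolding kneser_proper_col_def by (rule conjunct1)
  from col have no_mono: "\<not> (\<exists>S. S \<subseteq> E \<and> card S = 2 \<and>
      (\<forall>e1\<in>S. \<forall>e2\<in>S. e1 \<noteq> e2 \<longrightarrow> card (e1 \<inter> e2) \<le> s) \<and> (\<exists>c. \<forall>e\<in>S. f e = c))"
    unfolding kneser_proper_col_def by (rule conjunct2)
  have "inj_on f E"
  proof (rule inj_onI, rule ccontr)
    fix e1 e2 assume "e1 \<in> E" "e2 \<in> E" "f e1 = f e2" "e1 \<noteq> e2"
    moreover have "card (e1 \<inter> e2) \<le> s"
      using assms \<open>e1 \<in> E\<close> \<open>e2 \<in> E\<close> \<open>e1 \<noteq> e2\<close> by (rule pairwiseD)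
    ultimately have "{e1, e2} \<subseteq> E \<and> card {e1, e2} = 2 \<and>
        (\<forall>a\<in>{e1, e2}. \<forall>b\<in>{e1, e2}. a \<noteq> b \<longrightarrow> card (a \<inter> b) \<le> s) \<and> (\<exists>c. \<forall>e\<in>{e1, e2}. f e = c)"
      by (auto simp: Int_commute)
    with no_mono show False
      by (rule notE[OF _ exI])
  qed
  with range show "f ` E \<subseteq> {..<n} \<and> inj_on f E"
    by auto
next
  assume "f ` E \<subseteq> {..<n} \<and> inj_on f E"
  then have range: "f ` E \<subseteq> {..<n}" and inj: "inj_on f E" by auto
  show "kneser_proper_col 2 E s f n"
    unfolding kneser_proper_col_def
  proof (intro conjI notI)
    show "\<forall>e\<in>E. f e < n" using range by auto
  next
    assume "\<exists>S. S \<subseteq> E \<and> card S = 2 \<and>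
      (\<forall>e1\<in>S. \<forall>e2\<in>S. e1 \<noteq> e2 \<longrightarrow> card (e1 \<inter> e2) \<le> s) \<and> (\<exists>c. \<forall>e\<in>S. f e = c)"
    then obtain S c where "S \<subseteq> E" "card S = 2" "\<forall>e\<in>S. f e = c" by blast
    moreover obtain e1 e2 where "S = {e1, e2}" "e1 \<noteq> e2"
      using \<open>card S = 2\<close> unfolding card_2_iff by blast
    ultimately have "e1 \<in> E" "e2 \<in> E" "f e1 = f e2" by auto
    with inj \<open>e1 \<noteq> e2\<close> show False
      by (meson inj_onD)
  qed
qed

lemma kneser_chi_2_eq_card:
  assumes "finite E"
    and "pairwise (\<lambda>e1 e2. card (e1 \<inter> e2) \<le> s) E"
  shows "kneser_chi 2 E s = card E"
proof -
  have "kneser_chi 2 E s = (LEAST n::nat. \<exists>h. h ` E \<subseteq> {..<n} \<and> inj_on h E)"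
    unfolding kneser_chi_def kneser_proper_col_2_iff[OF assms(2)] ..
  also have "\<dots> = card E"
  proof (rule Least_equality)
    obtain h where "bij_betw h E {0..<card E}"
      using ex_bij_betw_finite_nat[OF assms(1)] by blast
    then show "\<exists>h. h ` E \<subseteq> {..<card E} \<and> inj_on h E"
      by (auto simp: bij_betw_def atLeast0LessThan)
  next
    fix n :: nat assume "\<exists>h. h ` E \<subseteq> {..<n} \<and> inj_on h E"
    then show "card E \<le> n"
      by (metis card_inj_on_le card_lessThan finite_lessThan)
  qed
  finally show ?thesis .
qed

lemma cd_eqI:
  assumes "cd_admissible r V E t X0 X" and "card X0 = n"
    and "\<And>X0 X. cd_admissible r V E t X0 X \<Longrightarrow> n \<le> card X0"
  shows "cd r V E t = n"
  unfolding cd_def by (rule Least_equality) (use assms in auto)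

lemma ecd_eqI:
  assumes "cd_admissible r V E t X0 X" and "card X0 = n"
    and "\<forall>i\<in>{1..r}. \<forall>j\<in>{1..r}. \<bar>int (card (X i)) - int (card (X j))\<bar> \<le> 1"
    and "\<And>X0 X. cd_admissible r V E t X0 X \<Longrightarrow> n \<le> card X0"
  shows "ecd r V E t = n"
  unfolding ecd_def by (rule Least_equality) (use assms in auto)

lemma cd_admissible_2_edge_bound:
  assumes adm: "cd_admissible 2 V E l X0 X" and "e \<in> E" "e \<subseteq> V" "finite e"
  shows "2 * l + 2 \<le> card e + card (e \<inter> X0)"
proof -
  have parts: "{1..2::nat} = {1, 2}" by auto
  have "X 1 \<union> X 2 = V - X0" "X 1 \<inter> X 2 = {}" "l < card (e - X 1)" "l < card (e - X 2)"
    using adm \<open>e \<in> E\<close> unfolding cd_admissible_def parts by auto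
  moreover from this \<open>e \<subseteq> V\<close> have "(e - X 1) \<union> (e - X 2) = e" "(e - X 1) \<inter> (e - X 2) = e \<inter> X0"
    by auto
  ultimately show ?thesis
    using card_Un_Int[of "e - X 1" "e - X 2"] \<open>finite e\<close> by simp
qed

lemma cd_admissible_2_card_ge:
  assumes adm: "cd_admissible 2 V E l X0 X" and hyp: "hypergraph V E"
    and disj: "pairwise disjnt E" and size: "\<And>e. e \<in> E \<Longrightarrow> card e = m"
  shows "card E * (2 * l + 2 - m) \<le> card X0"
proof -
  have "finite V" and edges: "E \<subseteq> Pow V"
    using hyp unfolding hypergraph_def by auto
  moreover have "X0 \<subseteq> V"
    using adm unfolding cd_admissible_def by blast
  ultimately have fin: "finite E" "finite X0" "\<And>e. e \<in> E \<Longrightarrow> finite e"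
    by (auto intro: finite_subset)
  have "2 * l + 2 - m \<le> card (e \<inter> X0)" if "e \<in> E" for e
    using cd_admissible_2_edge_bound[OF adm that] size[OF that] edges that fin by auto
  then have "card E * (2 * l + 2 - m) \<le> (\<Sum>e\<in>E. card (e \<inter> X0))"
    using sum_bounded_below[of E "2 * l + 2 - m"] by simp
  also have "\<dots> = card (\<Union>e\<in>E. e \<inter> X0)"
    using disj fin by (intro card_UN_disjoint[symmetric]) (auto simp: pairwise_def disjnt_def)
  also have "\<dots> \<le> card X0"
    using fin by (intro card_mono) auto
  finally show ?thesis .
qed

lemma card_div_mod_set:
  fixes m :: nat
  assumes "0 < m"
  shows "card {x. x div m \<in> J \<and> x mod m \<in> R} = card J * card (R \<inter> {..<m})"
proof -
  have "{x. x div m \<in> J \<and> x mod m \<in> R} = (\<lambda>(j, p). j * m + p) ` (J \<times> (R \<inter> {..<m}))"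
  proof (intro equalityI subsetI)
    fix x assume "x \<in> {x. x div m \<in> J \<and> x mod m \<in> R}"
    moreover have "x = x div m * m + x mod m" by simp
    ultimately show "x \<in> (\<lambda>(j, p). j * m + p) ` (J \<times> (R \<inter> {..<m}))"
      using assms by (intro image_eqI[where x = "(x div m, x mod m)"]) auto
  qed (use assms in auto)
  moreover have "inj_on (\<lambda>(j, p). j * m + p) (J \<times> (R \<inter> {..<m}))"
  proof (rule inj_onI, clarify)
    fix j p j' p' assume "p < m" "p' < m" and eq: "j * m + p = j' * m + p'"
    have "j = (j * m + p) div m" "p = (j * m + p) mod m"
      using \<open>p < m\<close> by simp_all
    moreover have "(j' * m + p') div m = j'" "(j' * m + p') mod m = p'"
      using \<open>p' < m\<close> by simp_all
    ultimately show "j = j' \<and> p = p'"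
      unfolding eq by simp
  qed
  ultimately show ?thesis
    by (simp add: card_image card_cartesian_product)
qed

definition blocks :: "nat \<Rightarrow> nat \<Rightarrow> nat set set" where
  "blocks k m = (\<lambda>j. {x. x div m = j}) ` {..<k}"

lemma card_mem_blocks:
  assumes "0 < m" and "e \<in> blocks k m"
  shows "card e = m"
proof -
  obtain j where "e = {x. x div m \<in> {j} \<and> x mod m \<in> UNIV}"
    using assms(2) by (auto simp: blocks_def)
  then show ?thesis
    using card_div_mod_set[OF assms(1), of "{j}" UNIV] by simp
qed

lemma hypergraph_blocks:
  assumes "0 < m"
  shows "hypergraph {..<k * m} (blocks k m)"
  unfolding hypergraph_def blocks_def
proof (intro conjI)
  show "(\<lambda>j. {x. x div m = j}) ` {..<k} \<subseteq> Pow {..<k * m}"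
    using assms by (auto simp: div_less_iff_less_mult[symmetric])
  show "{} \<notin> (\<lambda>j. {x. x div m = j}) ` {..<k}"
    using assms by (auto simp: set_eq_iff) (metis div_mult_self1_is_m)
qed simp

lemma card_blocks:
  assumes "0 < m"
  shows "card (blocks k m) = k"
  unfolding blocks_def
proof (subst card_image)
  show "inj_on (\<lambda>j. {x. x div m = j}) {..<k}"
    using assms by (intro inj_onI) (metis (mono_tags) div_mult_self1_is_m mem_Collect_eq)
qed simp

lemma pairwise_disjnt_blocks: "pairwise disjnt (blocks k m)"
  unfolding blocks_def pairwise_def disjnt_def by auto

lemma kneser_chi_blocks:
  assumes "0 < m"
  shows "kneser_chi 2 (blocks k m) s = k"
proof -
  have "pairwise (\<lambda>e1 e2. card (e1 \<inter> e2) \<le> s) (blocks k m)"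
    using pairwise_disjnt_blocks by (rule pairwise_mono) (auto simp: disjnt_def)
  moreover have "finite (blocks k m)"
    by (simp add: blocks_def)
  ultimately show ?thesis
    using kneser_chi_2_eq_card card_blocks[OF assms] by metis
qed

lemma blocks_balanced_admissible:
  assumes "l < m" and "m \<le> 2 * l + 2"
  obtains X0 X where "cd_admissible 2 {..<k * m} (blocks k m) l X0 X"
    and "card X0 = k * (2 * l + 2 - m)" and "card (X 1) = card (X 2)"
proof -
  have m: "0 < m" using assms by simp
  define a where "a = 2 * l + 2 - m"
  define lift where "lift R = {x. x div m \<in> {..<k} \<and> x mod m \<in> R}" for R
  have card_lift: "card (lift R) = k * card (R \<inter> {..<m})" for R
    unfolding lift_def card_div_mod_set[OF m] by simp
  have lift_Un: "lift R \<union> lift S = lift (R \<union> S)"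
    and lift_Int: "lift R \<inter> lift S = lift (R \<inter> S)"
    and lift_Compl: "{..<k * m} - lift R = lift (- R)" for R S
    using m by (auto simp: lift_def div_less_iff_less_mult)
  define X where "X i = (if i = 1 then lift {a..<l + 1} else lift {l + 1..})" for i :: nat
  have parts: "{1..2::nat} = {1, 2}" by auto
  have "cd_admissible 2 {..<k * m} (blocks k m) l (lift {..<a}) X"
    unfolding cd_admissible_def parts
  proof (intro conjI ballI impI)
    show "lift {..<a} \<subseteq> {..<k * m}"
      using m by (auto simp: lift_def div_less_iff_less_mult)
    have "{a..<l + 1} \<union> {l + 1..} = - {..<a}"
      using assms by (auto simp: a_def)
    then show "(\<Union>i\<in>{1, 2}. X i) = {..<k * m} - lift {..<a}"
      by (simp add: X_def lift_Un lift_Compl Un_commute)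
    have "X 1 \<inter> X 2 = {}"
      by (simp add: X_def lift_Int) (simp add: lift_def)
    moreover fix i j :: nat assume "i \<in> {1, 2}" "j \<in> {1, 2}" "i \<noteq> j"
    ultimately show "X i \<inter> X j = {}"
      by (auto simp: Int_commute)
  next
    fix e i assume "e \<in> blocks k m" "i \<in> {1, 2::nat}"
    then obtain j where "j < k" and e: "e = {x. x div m = j}"
      by (auto simp: blocks_def)
    have card_minus_lift: "card (e - lift R) = card (- R \<inter> {..<m})" for R
    proof -
      have "e - lift R = {x. x div m \<in> {j} \<and> x mod m \<in> - R}"
        using \<open>j < k\<close> by (auto simp: e lift_def)
      then show ?thesis
        by (simp only: card_div_mod_set[OF m]) simp
    qed
    have "card (e - X 1) = card ({..<a} \<union> {l + 1..<m})"
    proof -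
      have "- {a..<l + 1} \<inter> {..<m} = {..<a} \<union> {l + 1..<m}"
        using assms by (auto simp: a_def)
      then show ?thesis
        by (simp add: X_def card_minus_lift)
    qed
    also have "\<dots> = l + 1"
      using assms by (subst card_Un_disjoint) (auto simp: a_def)
    finally have "card (e - X 1) = l + 1" .
    moreover have "card (e - X 2) = l + 1"
    proof -
      have "- {l + 1..} \<inter> {..<m} = {..<l + 1}"
        using assms by auto
      then show ?thesis
        by (simp add: X_def card_minus_lift)
    qed
    ultimately show "\<not> card (e - X i) \<le> l"
      using \<open>i \<in> {1, 2}\<close> by auto
  qed
  moreover have "{..<a} \<inter> {..<m} = {..<a}"
    using assms by (auto simp: a_def)
  then have "card (lift {..<a}) = k * (2 * l + 2 - m)"
    by (simp add: card_lift a_def)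
  moreover have "{a..<l + 1} \<inter> {..<m} = {a..<l + 1}" "{l + 1..} \<inter> {..<m} = {l + 1..<m}"
    using assms by auto
  then have "card (X 1) = card (X 2)"
    using assms by (simp add: X_def card_lift a_def)
  ultimately show ?thesis using that by blast
qed

lemma cd_ecd_blocks:
  assumes "l < m" and "m \<le> 2 * l + 2"
  shows "cd 2 {..<k * m} (blocks k m) l = k * (2 * l + 2 - m)"
    and "ecd 2 {..<k * m} (blocks k m) l = k * (2 * l + 2 - m)"
proof -
  have m: "0 < m" using assms by simp
  have lower: "k * (2 * l + 2 - m) \<le> card X0"
    if "cd_admissible 2 {..<k * m} (blocks k m) l X0 X" for X0 X
    using cd_admissible_2_card_ge[OF that hypergraph_blocks[OF m] pairwise_disjnt_blocks
        card_mem_blocks[OF m]]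
    by (simp add: card_blocks[OF m])
  obtain X0 X where adm: "cd_admissible 2 {..<k * m} (blocks k m) l X0 X"
    and card: "card X0 = k * (2 * l + 2 - m)" and "card (X 1) = card (X 2)"
    using blocks_balanced_admissible[OF assms] .
  moreover have "{1..2::nat} = {1, 2}" by auto
  ultimately have "\<forall>i\<in>{1..2}. \<forall>j\<in>{1..2}. \<bar>int (card (X i)) - int (card (X j))\<bar> \<le> 1"
    by auto
  with adm card lower
  show "cd 2 {..<k * m} (blocks k m) l = k * (2 * l + 2 - m)"
    and "ecd 2 {..<k * m} (blocks k m) l = k * (2 * l + 2 - m)"
    by (blast intro: cd_eqI ecd_eqI)+
qed

theorem theorem3:
  fixes k s :: nat
  assumes "k > 0" and "s > 0" and "even s"
  shows "\<exists>(V::nat set) E. hypergraph V E \<and> (\<forall>e\<in>E. s < card e) \<and>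
           kneser_chi 2 E s = k \<and>
           (\<forall>l\<in>{s div 2 + 1..s}. cd 2 V E l = k * (2 * l - s + 1) \<and>
                                  ecd 2 V E l = k * (2 * l - s + 1))"
proof -
  have m: "0 < s + 1" by simp
  have "\<forall>e\<in>blocks k (s + 1). s < card e"
    using card_mem_blocks[OF m] by simp
  moreover have "cd 2 {..<k * (s + 1)} (blocks k (s + 1)) l = k * (2 * l - s + 1) \<and>
      ecd 2 {..<k * (s + 1)} (blocks k (s + 1)) l = k * (2 * l - s + 1)"
    if "l \<in> {s div 2 + 1..s}" for l
  proof -
    from that have "l < s + 1" "s + 1 \<le> 2 * l + 2" "2 * l + 2 - (s + 1) = 2 * l - s + 1"
      by auto
    then show ?thesis
      using cd_ecd_blocks[of l "s + 1" k] by simp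
  qed
  ultimately show ?thesis
    using hypergraph_blocks[OF m] kneser_chi_blocks[OF m] by blast
qed

end
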